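(* Let $d\ge2$ be an integer and, for real $b,c$, let $$\rho_{bc}=a\sum_{i=0}^{d-1}|ii\rangle\langle ii|+b\sum_{i<j}|\psi^-_{ij}\rangle\langle\psi^-_{ij}|+c\sum_{i<j}|\psi^+_{ij}\rangle\langle\psi^+_{ij}|,\quad a=\frac1d\Big(1-(b+c)\frac{d(d-1)}2\Big).$$ If $(b,c)$ lies in the convex hull of the four points $B=\big(\tfrac{1}{d(d-1)},0\big)$, $C=\big(\tfrac{4}{d(3d-2)},0\big)$, $G=\big(\tfrac{3}{d(2d-1)},\tfrac{1}{d(2d-1)}\big)$, $K=\big(\tfrac1{d(d-1)},\tfrac1{d(d-1)}\big)$ in the $(b,c)$-plane, then $\rho_{bc}$ is pseudo one-copy undistillable, i.e. $\langle\phi|\rho_{bc}^{PT}|\phi\rangle\ge0$ for all $|\phi\rangle\in\mathbb{C}^d\otimes\mathbb{C}^d$ of Schmidt rank two.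
   Context: $|\psi^{\pm}_{ij}\rangle=\frac1{\sqrt2}(|ij\rangle\pm|ji\rangle)$, sums over $0\le i<j\le d-1$. $X^{PT}$ is the partial transpose on the second factor, $\langle ij|X^{PT}|kl\rangle=\langle il|X|kj\rangle$. *)

theory Defs
  imports "HOL-Analysis.Analysis" "HOL-Library.Complex_Order"
begin

text \<open>Vectors in C^d (x) C^d are functions on index pairs (i,j), i,j < d;
  operators are kernels (i,j) -> (k,l) -> complex, i.e. X (i,j) (k,l) = <ij|X|kl>.\<close>

type_synonym bivec = "nat \<times> nat \<Rightarrow> complex"
type_synonym biop = "nat \<times> nat \<Rightarrow> nat \<times> nat \<Rightarrow> complex"

definition ket :: "nat \<Rightarrow> nat \<Rightarrow> bivec" where
  "ket i j = (\<lambda>x. if x = (i, j) then 1 else 0)"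

definition psi_plus :: "nat \<Rightarrow> nat \<Rightarrow> bivec" where
  "psi_plus i j = (\<lambda>x. (ket i j x + ket j i x) / complex_of_real (sqrt 2))"

definition psi_minus :: "nat \<Rightarrow> nat \<Rightarrow> bivec" where
  "psi_minus i j = (\<lambda>x. (ket i j x - ket j i x) / complex_of_real (sqrt 2))"

definition proj :: "bivec \<Rightarrow> biop" where
  "proj v = (\<lambda>x y. v x * cnj (v y))"

definition rho_bc :: "nat \<Rightarrow> real \<Rightarrow> real \<Rightarrow> biop" where
  "rho_bc d b c = (\<lambda>x y.
     (let a = (1 / real d) * (1 - (b + c) * (real d * (real d - 1) / 2)) in
        complex_of_real a * (\<Sum>i<d. proj (ket i i) x y)
      + complex_of_real b * (\<Sum>i<d. \<Sum>j\<in>{i<..<d}. proj (psi_minus i j) x y)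
      + complex_of_real c * (\<Sum>i<d. \<Sum>j\<in>{i<..<d}. proj (psi_plus i j) x y)))"

definition partial_transpose :: "biop \<Rightarrow> biop" where
  "partial_transpose X = (\<lambda>(i, j) (k, l). X (i, l) (k, j))"

definition qform :: "nat \<Rightarrow> biop \<Rightarrow> bivec \<Rightarrow> complex" where
  "qform d X \<phi> = (\<Sum>x\<in>{0..<d} \<times> {0..<d}. \<Sum>y\<in>{0..<d} \<times> {0..<d}. cnj (\<phi> x) * X x y * \<phi> y)"

definition schmidt_rank :: "nat \<Rightarrow> bivec \<Rightarrow> nat" where
  "schmidt_rank d \<phi> = (LEAST r. \<exists>u v :: nat \<Rightarrow> nat \<Rightarrow> complex.
      \<forall>i<d. \<forall>j<d. \<phi> (i, j) = (\<Sum>k<r. u k i * v k j))"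

end

(* On the index box the partial transpose of rho_bc is
     (a - c) P + (b + c)/2 I + (c - b)/2 |Phi><Phi|,
   where P projects onto span {|ii>} and Phi = sum_i |ii>.  Hence
   <phi|rho_bc^PT|phi> = (a - c) D + (b + c)/2 F + (c - b)/2 T with D = sum_i |phi_ii|^2,
   F = ||phi||^2 and T = |sum_i phi_ii|^2, an affine function of (b, c), so it suffices to check
   the four vertices.  After clearing positive denominators the values there are
   (d - 1) D + F - T, d D + 2 F - 2 T, 2 F - T and F - D, which are nonnegative because
   D <= F, T <= d D (Cauchy-Schwarz) and T <= 2 F.  The last bound is where Schmidt rank two
   enters: after Gram-Schmidt, phi = u (x) w + u' (x) w' with u orthogonal to u', so
   F = |u|^2 |w|^2 + |u'|^2 |w'|^2 while |sum_i phi_ii| <= |sum_i u_i w_i| + |sum_i u'_i w'_i|. *)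

theory Submission
  imports Defs
begin

lemma of_real_of_bool [simp]: "of_real (of_bool P) = of_bool P"
  by (cases P) simp_all

lemma cnj_mult_self_eq_norm_sq: "cnj z * z = (of_real (cmod z))\<^sup>2"
  by (simp add: mult.commute flip: complex_norm_square)

lemma sum_of_bool_eq_delta:
  fixes f :: "'a \<Rightarrow> 'b::semiring_1"
  assumes "finite A" "x \<in> A"
  shows "(\<Sum>y\<in>A. of_bool (x = y) * f y) = f x"
proof -
  have "(\<Sum>y\<in>A. of_bool (x = y) * f y) = (\<Sum>y\<in>A. if y = x then f x else 0)"
    by (intro sum.cong) auto
  with assms show ?thesis by simp
qed

lemma sum_upper_pairs_at:
  fixes f :: "nat \<Rightarrow> nat \<Rightarrow> 'a::comm_monoid_add"
  assumes "p < d" "q < d"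
    and "\<And>i j. i < j \<Longrightarrow> (i, j) \<noteq> (p, q) \<Longrightarrow> (i, j) \<noteq> (q, p) \<Longrightarrow> f i j = 0"
  shows "(\<Sum>i<d. \<Sum>j\<in>{i<..<d}. f i j) = (if p \<noteq> q then f (min p q) (max p q) else 0)"
proof -
  define P where "P = (if p \<noteq> q then {(min p q, max p q)} else {})"
  have "(\<Sum>i<d. \<Sum>j\<in>{i<..<d}. f i j) = (\<Sum>(i, j)\<in>Sigma {..<d} (\<lambda>i. {i<..<d}). f i j)"
    by (rule sum.Sigma) auto
  also have "\<dots> = (\<Sum>(i, j)\<in>P. f i j)"
    using assms by (intro sum.mono_neutral_right) (auto simp: P_def min_def max_def, metis+)
  finally show ?thesis by (simp add: P_def)
qed

lemma norm_sum_mult_sq_le: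
  fixes f g :: "'a \<Rightarrow> complex"
  shows "(cmod (\<Sum>i\<in>I. f i * g i))\<^sup>2 \<le> (\<Sum>i\<in>I. (cmod (f i))\<^sup>2) * (\<Sum>i\<in>I. (cmod (g i))\<^sup>2)"
proof -
  have "cmod (\<Sum>i\<in>I. f i * g i) \<le> (\<Sum>i\<in>I. cmod (f i) * cmod (g i))"
    by (metis (no_types, lifting) norm_mult norm_sum sum.cong)
  then have "(cmod (\<Sum>i\<in>I. f i * g i))\<^sup>2 \<le> (\<Sum>i\<in>I. cmod (f i) * cmod (g i))\<^sup>2"
    by (intro power_mono) auto
  also have "\<dots> \<le> (\<Sum>i\<in>I. (cmod (f i))\<^sup>2) * (\<Sum>i\<in>I. (cmod (g i))\<^sup>2)"
    by (rule Cauchy_Schwarz_ineq_sum)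
  finally show ?thesis .
qed

definition rho_bc_a :: "nat \<Rightarrow> real \<Rightarrow> real \<Rightarrow> real" where
  "rho_bc_a d b c = (1 / real d) * (1 - (b + c) * (real d * (real d - 1) / 2))"

lemma psi_plus_real:
  "psi_plus i j x = of_real ((of_bool (x = (i, j)) + of_bool (x = (j, i))) / sqrt 2)"
  unfolding psi_plus_def ket_def of_real_divide of_real_add of_real_of_bool by (simp only: of_bool_def)

lemma psi_minus_real:
  "psi_minus i j x = of_real ((of_bool (x = (i, j)) - of_bool (x = (j, i))) / sqrt 2)"
  unfolding psi_minus_def ket_def of_real_divide of_real_diff of_real_of_bool by (simp only: of_bool_def)

lemma proj_of_real_div_sqrt2:
  assumes "\<And>x. v x = of_real (r x / sqrt 2)"
  shows "proj v x y = of_real (r x * r y / 2)"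
proof -
  have "r x / sqrt 2 * (r y / sqrt 2) = r x * r y / 2"
    by (simp add: times_divide_times_eq)
  then show ?thesis
    by (simp add: proj_def assms flip: of_real_mult)
qed

lemma sum_proj_pair_vectors:
  fixes s :: real
  assumes "p < d" "q < d" "s * s = 1"
    and v: "\<And>i j x. v i j x = of_real ((of_bool (x = (i, j)) + s * of_bool (x = (j, i))) / sqrt 2)"
  shows "(\<Sum>i<d. \<Sum>j\<in>{i<..<d}. proj (v i j) (p, q) y)
    = of_real (of_bool (p \<noteq> q) * (of_bool (y = (p, q)) + s * of_bool (y = (q, p))) / 2)"
proof -
  note proj_v = proj_of_real_div_sqrt2[OF v]
  have "complex_of_real s * complex_of_real s = 1"
    using \<open>s * s = 1\<close> by (metis of_real_1 of_real_mult)
  have "(\<Sum>i<d. \<Sum>j\<in>{i<..<d}. proj (v i j) (p, q) y)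
     = (if p \<noteq> q then proj (v (min p q) (max p q)) (p, q) y else 0)"
    by (rule sum_upper_pairs_at[OF assms(1,2)]) (auto simp: proj_v)
  also have "\<dots> = of_real (of_bool (p \<noteq> q) * (of_bool (y = (p, q)) + s * of_bool (y = (q, p))) / 2)"
    using \<open>complex_of_real s * complex_of_real s = 1\<close>
    by (cases "p < q") (auto simp: proj_v min_def max_def algebra_simps)
  finally show ?thesis .
qed

lemma sum_proj_psi_plus:
  assumes "p < d" "q < d"
  shows "(\<Sum>i<d. \<Sum>j\<in>{i<..<d}. proj (psi_plus i j) (p, q) y)
    = of_real (of_bool (p \<noteq> q) * (of_bool (y = (p, q)) + of_bool (y = (q, p))) / 2)"
  using sum_proj_pair_vectors[of p d q 1 psi_plus y] assms by (simp add: psi_plus_real)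

lemma sum_proj_psi_minus:
  assumes "p < d" "q < d"
  shows "(\<Sum>i<d. \<Sum>j\<in>{i<..<d}. proj (psi_minus i j) (p, q) y)
    = of_real (of_bool (p \<noteq> q) * (of_bool (y = (p, q)) - of_bool (y = (q, p))) / 2)"
  using sum_proj_pair_vectors[of p d q "-1" psi_minus y] assms by (simp add: psi_minus_real)

lemma sum_proj_ket_diag:
  assumes "p < d"
  shows "(\<Sum>i<d. proj (ket i i) (p, q) y) = of_real (of_bool (p = q \<and> y = (p, q)))"
proof -
  have "(\<Sum>i<d. proj (ket i i) (p, q) y) = (\<Sum>i<d. if i = p then of_bool (p = q \<and> y = (p, q)) else 0)"
    by (intro sum.cong) (auto simp: proj_def ket_def)
  with assms show ?thesis by simp
qed

lemma rho_bc_entry: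
  assumes "p < d" "q < d"
  shows "rho_bc d b c (p, q) y = of_real (rho_bc_a d b c * of_bool (p = q \<and> y = (p, q))
    + of_bool (p \<noteq> q) * ((b + c) / 2 * of_bool (y = (p, q)) + (c - b) / 2 * of_bool (y = (q, p))))"
proof -
  have "rho_bc d b c (p, q) y = of_real (rho_bc_a d b c * of_bool (p = q \<and> y = (p, q))
      + b * (of_bool (p \<noteq> q) * (of_bool (y = (p, q)) - of_bool (y = (q, p))) / 2)
      + c * (of_bool (p \<noteq> q) * (of_bool (y = (p, q)) + of_bool (y = (q, p))) / 2))"
    unfolding rho_bc_def Let_def rho_bc_a_def[symmetric] using assms
    by (simp only: sum_proj_ket_diag sum_proj_psi_minus sum_proj_psi_plus of_real_add of_real_mult)
  also have "\<dots> = of_real (rho_bc_a d b c * of_bool (p = q \<and> y = (p, q))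
    + of_bool (p \<noteq> q) * ((b + c) / 2 * of_bool (y = (p, q)) + (c - b) / 2 * of_bool (y = (q, p))))"
    by (rule arg_cong[where f = of_real]) (simp add: field_simps)
  finally show ?thesis .
qed

lemma partial_transpose_rho_bc_entry:
  assumes "x \<in> {0..<d} \<times> {0..<d}" "y \<in> {0..<d} \<times> {0..<d}"
  shows "partial_transpose (rho_bc d b c) x y = of_real ((rho_bc_a d b c - c) * of_bool (x = y \<and> fst x = snd x)
    + (b + c) / 2 * of_bool (x = y) + (c - b) / 2 * of_bool (fst x = snd x \<and> fst y = snd y))"
proof -
  obtain i j k l where xy: "x = (i, j)" "y = (k, l)" and "i < d" "l < d"
    using assms by (cases x, cases y) auto
  then have "partial_transpose (rho_bc d b c) (i, j) (k, l) = of_real (rho_bc_a d b c * of_bool (i = l \<and> (k, j) = (i, l))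
      + of_bool (i \<noteq> l) * ((b + c) / 2 * of_bool ((k, j) = (i, l)) + (c - b) / 2 * of_bool ((k, j) = (l, i))))"
    by (simp only: partial_transpose_def prod.case rho_bc_entry)
  also have "\<dots> = of_real ((rho_bc_a d b c - c) * of_bool ((i, j) = (k, l) \<and> i = j)
      + (b + c) / 2 * of_bool ((i, j) = (k, l)) + (c - b) / 2 * of_bool (i = j \<and> k = l))"
    by (rule arg_cong[where f = of_real]) (cases "i = l"; auto simp: field_simps)
  finally show ?thesis by (simp add: xy)
qed

lemma qform_cong:
  assumes "\<And>x y. x \<in> {0..<d} \<times> {0..<d} \<Longrightarrow> y \<in> {0..<d} \<times> {0..<d} \<Longrightarrow> X x y = Y x y"
  shows "qform d X \<phi> = qform d Y \<phi>"
  unfolding qform_def using assms by (intro sum.cong refl) auto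

lemma qform_add: "qform d (\<lambda>x y. X x y + Y x y) \<phi> = qform d X \<phi> + qform d Y \<phi>"
  unfolding qform_def by (simp add: distrib_left distrib_right sum.distrib)

lemma qform_scale: "qform d (\<lambda>x y. a * X x y) \<phi> = a * qform d X \<phi>"
  unfolding qform_def by (simp add: sum_distrib_left ac_simps)

lemma qform_diagonal_kernel:
  "qform d (\<lambda>x y. of_bool (x = y) * k x) \<phi> = (\<Sum>x\<in>{0..<d} \<times> {0..<d}. k x * (cnj (\<phi> x) * \<phi> x))"
proof -
  have integrand: "cnj (\<phi> x) * (of_bool (x = y) * k x) * \<phi> y = of_bool (x = y) * (k x * (cnj (\<phi> x) * \<phi> y))"
    for x y by simp
  show ?thesis
    unfolding qform_def integrand by (intro sum.cong refl) (simp add: sum_of_bool_eq_delta)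
qed

definition sq_norm :: "nat \<Rightarrow> bivec \<Rightarrow> real" where
  "sq_norm d \<phi> = (\<Sum>x\<in>{0..<d} \<times> {0..<d}. (cmod (\<phi> x))\<^sup>2)"

definition diag_sq_norm :: "nat \<Rightarrow> bivec \<Rightarrow> real" where
  "diag_sq_norm d \<phi> = (\<Sum>i<d. (cmod (\<phi> (i, i)))\<^sup>2)"

definition coeff_trace :: "nat \<Rightarrow> bivec \<Rightarrow> complex" where
  "coeff_trace d \<phi> = (\<Sum>i<d. \<phi> (i, i))"

lemma sum_box_diagonal:
  fixes d :: nat
  shows "(\<Sum>x\<in>{0..<d} \<times> {0..<d} \<inter> {x. fst x = snd x}. h x) = (\<Sum>i<d. h (i, i))"
proof -
  have "{0..<d} \<times> {0..<d} \<inter> {x. fst x = snd x} = (\<lambda>i. (i, i)) ` {..<d}" by auto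
  then show ?thesis by (simp add: sum.reindex inj_on_def)
qed

lemma qform_identity: "qform d (\<lambda>x y. of_bool (x = y)) \<phi> = of_real (sq_norm d \<phi>)"
  using qform_diagonal_kernel[of d "\<lambda>_. 1" \<phi>]
  by (simp add: sq_norm_def cnj_mult_self_eq_norm_sq)

lemma qform_diag_identity:
  "qform d (\<lambda>x y. of_bool (x = y \<and> fst x = snd x)) \<phi> = of_real (diag_sq_norm d \<phi>)"
  using qform_diagonal_kernel[of d "\<lambda>x. of_bool (fst x = snd x)" \<phi>]
  by (simp add: of_bool_conj sum_box_diagonal diag_sq_norm_def cnj_mult_self_eq_norm_sq)

lemma qform_diag_rank_one:
  "qform d (\<lambda>x y. of_bool (fst x = snd x \<and> fst y = snd y)) \<phi> = of_real ((cmod (coeff_trace d \<phi>))\<^sup>2)"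
proof -
  have "qform d (\<lambda>x y. of_bool (fst x = snd x \<and> fst y = snd y)) \<phi>
      = (\<Sum>x\<in>{0..<d} \<times> {0..<d}. of_bool (fst x = snd x) * cnj (\<phi> x))
        * (\<Sum>y\<in>{0..<d} \<times> {0..<d}. of_bool (fst y = snd y) * \<phi> y)"
    unfolding qform_def sum_product by (intro sum.cong refl) (simp add: of_bool_conj)
  then show ?thesis
    by (simp add: sum_box_diagonal coeff_trace_def cnj_mult_self_eq_norm_sq flip: cnj_sum)
qed

definition pt_value :: "nat \<Rightarrow> real \<Rightarrow> real \<Rightarrow> real \<Rightarrow> real \<Rightarrow> real \<Rightarrow> real" where
  "pt_value d b c D F T = (rho_bc_a d b c - c) * D + (b + c) / 2 * F + (c - b) / 2 * T"

lemma qform_partial_transpose_rho_bc: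
  "qform d (partial_transpose (rho_bc d b c)) \<phi>
    = of_real (pt_value d b c (diag_sq_norm d \<phi>) (sq_norm d \<phi>) ((cmod (coeff_trace d \<phi>))\<^sup>2))"
proof -
  have "qform d (partial_transpose (rho_bc d b c)) \<phi>
      = qform d (\<lambda>x y. of_real (rho_bc_a d b c - c) * of_bool (x = y \<and> fst x = snd x)
          + of_real ((b + c) / 2) * of_bool (x = y)
          + of_real ((c - b) / 2) * of_bool (fst x = snd x \<and> fst y = snd y)) \<phi>"
    by (rule qform_cong) (simp add: partial_transpose_rho_bc_entry)
  also have "\<dots> = of_real (rho_bc_a d b c - c) * of_real (diag_sq_norm d \<phi>)
      + of_real ((b + c) / 2) * of_real (sq_norm d \<phi>)
      + of_real ((c - b) / 2) * of_real ((cmod (coeff_trace d \<phi>))\<^sup>2)"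
    by (simp only: qform_add qform_scale qform_identity qform_diag_identity qform_diag_rank_one)
  finally show ?thesis
    by (simp add: pt_value_def)
qed

lemma diag_sq_norm_nonneg: "0 \<le> diag_sq_norm d \<phi>"
  by (simp add: diag_sq_norm_def sum_nonneg)

lemma diag_sq_norm_le_sq_norm: "diag_sq_norm d \<phi> \<le> sq_norm d \<phi>"
proof -
  have "diag_sq_norm d \<phi> = (\<Sum>x\<in>(\<lambda>i. (i, i)) ` {..<d}. (cmod (\<phi> x))\<^sup>2)"
    by (simp add: diag_sq_norm_def sum.reindex inj_on_def)
  also have "\<dots> \<le> sq_norm d \<phi>"
    unfolding sq_norm_def by (rule sum_mono2) auto
  finally show ?thesis .
qed

lemma coeff_trace_sq_le_diag: "(cmod (coeff_trace d \<phi>))\<^sup>2 \<le> real d * diag_sq_norm d \<phi>"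
  using norm_sum_mult_sq_le[of "\<lambda>_. 1" "\<lambda>i. \<phi> (i, i)" "{..<d}"]
  by (simp add: coeff_trace_def diag_sq_norm_def)

lemma sq_norm_orthogonal_sum:
  assumes orth: "(\<Sum>i<d. cnj (u i) * u' i) = 0"
    and \<phi>: "\<And>i j. i < d \<Longrightarrow> j < d \<Longrightarrow> \<phi> (i, j) = u i * w j + u' i * w' j"
  shows "sq_norm d \<phi> = (\<Sum>i<d. (cmod (u i))\<^sup>2) * (\<Sum>j<d. (cmod (w j))\<^sup>2)
                      + (\<Sum>i<d. (cmod (u' i))\<^sup>2) * (\<Sum>j<d. (cmod (w' j))\<^sup>2)"
proof -
  have orth': "(\<Sum>i<d. cnj (u' i) * u i) = 0"
    using arg_cong[OF orth, of cnj] by (simp add: mult.commute)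
  have "of_real (sq_norm d \<phi>) = (\<Sum>i<d. \<Sum>j<d. cnj (\<phi> (i, j)) * \<phi> (i, j))"
    by (simp add: sq_norm_def sum.cartesian_product' atLeast0LessThan cnj_mult_self_eq_norm_sq)
  also have "\<dots> = (\<Sum>i<d. \<Sum>j<d. (cnj (u i) * u i) * (cnj (w j) * w j) + (cnj (u' i) * u' i) * (cnj (w' j) * w' j)
      + (cnj (u i) * u' i) * (cnj (w j) * w' j) + (cnj (u' i) * u i) * (cnj (w' j) * w j))"
    by (intro sum.cong refl) (simp add: \<phi> algebra_simps)
  also have "\<dots> = (\<Sum>i<d. cnj (u i) * u i) * (\<Sum>j<d. cnj (w j) * w j)
      + (\<Sum>i<d. cnj (u' i) * u' i) * (\<Sum>j<d. cnj (w' j) * w' j)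
      + (\<Sum>i<d. cnj (u i) * u' i) * (\<Sum>j<d. cnj (w j) * w' j)
      + (\<Sum>i<d. cnj (u' i) * u i) * (\<Sum>j<d. cnj (w' j) * w j)"
    by (simp only: sum_product sum.distrib)
  finally have "of_real (sq_norm d \<phi>) = (\<Sum>i<d. cnj (u i) * u i) * (\<Sum>j<d. cnj (w j) * w j)
      + (\<Sum>i<d. cnj (u' i) * u' i) * (\<Sum>j<d. cnj (w' j) * w' j)"
    by (simp only: orth orth' mult_zero_left add_0_right)
  also have "\<dots> = of_real ((\<Sum>i<d. (cmod (u i))\<^sup>2) * (\<Sum>j<d. (cmod (w j))\<^sup>2)
                      + (\<Sum>i<d. (cmod (u' i))\<^sup>2) * (\<Sum>j<d. (cmod (w' j))\<^sup>2))"
    by (simp add: cnj_mult_self_eq_norm_sq)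
  finally show ?thesis
    by (simp only: of_real_eq_iff)
qed

lemma coeff_trace_sq_le_orthogonal_sum:
  assumes orth: "(\<Sum>i<d. cnj (u i) * u' i) = 0"
    and \<phi>: "\<And>i j. i < d \<Longrightarrow> j < d \<Longrightarrow> \<phi> (i, j) = u i * w j + u' i * w' j"
  shows "(cmod (coeff_trace d \<phi>))\<^sup>2 \<le> 2 * sq_norm d \<phi>"
proof -
  define p where "p = cmod (\<Sum>i<d. u i * w i)"
  define q where "q = cmod (\<Sum>i<d. u' i * w' i)"
  have "cmod (coeff_trace d \<phi>) \<le> p + q"
    unfolding coeff_trace_def p_def q_def by (simp add: \<phi> sum.distrib norm_triangle_ineq)
  then have "(cmod (coeff_trace d \<phi>))\<^sup>2 \<le> (p + q)\<^sup>2"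
    by (intro power_mono) auto
  also have "\<dots> \<le> 2 * (p\<^sup>2 + q\<^sup>2)"
    using sum_squares_ge_zero[of "p - q" 0] by (simp add: power2_eq_square algebra_simps)
  also have "\<dots> \<le> 2 * ((\<Sum>i<d. (cmod (u i))\<^sup>2) * (\<Sum>j<d. (cmod (w j))\<^sup>2)
                      + (\<Sum>i<d. (cmod (u' i))\<^sup>2) * (\<Sum>j<d. (cmod (w' j))\<^sup>2))"
    using norm_sum_mult_sq_le[of u w "{..<d}"] norm_sum_mult_sq_le[of u' w' "{..<d}"]
    by (simp add: p_def q_def)
  also have "\<dots> = 2 * sq_norm d \<phi>"
    by (simp add: sq_norm_orthogonal_sum[OF orth \<phi>])
  finally show ?thesis .
qed

lemma coeff_trace_sq_le_sum_of_two_products: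
  assumes \<phi>: "\<And>i j. i < d \<Longrightarrow> j < d \<Longrightarrow> \<phi> (i, j) = u i * v j + u' i * v' j"
  shows "(cmod (coeff_trace d \<phi>))\<^sup>2 \<le> 2 * sq_norm d \<phi>"
proof -
  define \<mu> where "\<mu> = (\<Sum>i<d. cnj (u i) * u' i) / (\<Sum>i<d. cnj (u i) * u i)"
  define e where "e i = u' i - \<mu> * u i" for i
  define w where "w j = v j + \<mu> * v' j" for j
  have orth: "(\<Sum>i<d. cnj (u i) * e i) = 0"
  proof (cases "\<forall>i<d. u i = 0")
    case True
    then show ?thesis by (intro sum.neutral) simp
  next
    case False
    then have "(\<Sum>i<d. (cmod (u i))\<^sup>2) \<noteq> 0"
      by (subst sum_nonneg_eq_0_iff) auto
    moreover have "(\<Sum>i<d. cnj (u i) * u i) = of_real (\<Sum>i<d. (cmod (u i))\<^sup>2)"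
      by (simp add: cnj_mult_self_eq_norm_sq)
    ultimately have "(\<Sum>i<d. cnj (u i) * u i) \<noteq> 0"
      by (metis of_real_eq_0_iff)
    moreover have "(\<Sum>i<d. cnj (u i) * e i)
        = (\<Sum>i<d. cnj (u i) * u' i) - \<mu> * (\<Sum>i<d. cnj (u i) * u i)"
      by (simp add: e_def right_diff_distrib sum_subtractf sum_distrib_left mult.left_commute)
    ultimately show ?thesis
      by (simp add: \<mu>_def)
  qed
  have "\<phi> (i, j) = u i * w j + e i * v' j" if "i < d" "j < d" for i j
    using \<phi>[OF that] by (simp add: e_def w_def algebra_simps)
  with orth show ?thesis
    by (rule coeff_trace_sq_le_orthogonal_sum)
qed

lemma schmidt_rank_decomposition:
  "\<exists>u v. \<forall>i<d. \<forall>j<d. \<phi> (i, j) = (\<Sum>k<schmidt_rank d \<phi>. u k i * v k j)"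
proof -
  let ?decomposable = "\<lambda>r. \<exists>u v :: nat \<Rightarrow> nat \<Rightarrow> complex. \<forall>i<d. \<forall>j<d. \<phi> (i, j) = (\<Sum>k<r. u k i * v k j)"
  have "\<forall>i<d. \<forall>j<d. \<phi> (i, j) = (\<Sum>k<d. of_bool (i = k) * \<phi> (k, j))"
    by (intro allI impI) (rule sum_of_bool_eq_delta[symmetric], auto)
  then have "?decomposable d"
    by (intro exI[of _ "\<lambda>k i. of_bool (i = k)"] exI[of _ "\<lambda>k j. \<phi> (k, j)"])
  then have "?decomposable (LEAST r. ?decomposable r)"
    by (rule LeastI)
  then show ?thesis
    unfolding schmidt_rank_def .
qed

lemma coeff_trace_sq_le_schmidt_rank_two:
  assumes "schmidt_rank d \<phi> = 2"
  shows "(cmod (coeff_trace d \<phi>))\<^sup>2 \<le> 2 * sq_norm d \<phi>"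
proof -
  obtain u v :: "nat \<Rightarrow> nat \<Rightarrow> complex"
    where "\<forall>i<d. \<forall>j<d. \<phi> (i, j) = (\<Sum>k<2. u k i * v k j)"
    using schmidt_rank_decomposition[of d \<phi>] assms by auto
  then have "\<phi> (i, j) = u 0 i * v 0 j + u 1 i * v 1 j" if "i < d" "j < d" for i j
    using that by (simp add: numeral_2_eq_2)
  then show ?thesis
    by (rule coeff_trace_sq_le_sum_of_two_products)
qed

lemma pt_value_affine:
  assumes "d \<noteq> 0"
  shows "pt_value d b c D F T = D / real d
    + ((F - T - (real d - 1) * D) / 2, (F + T - (real d + 1) * D) / 2) \<bullet> (b, c)"
  using assms by (simp add: pt_value_def rho_bc_a_def field_simps)

lemma convex_pt_value_nonneg:
  assumes "d \<noteq> 0"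
  shows "convex {p. 0 \<le> pt_value d (fst p) (snd p) D F T}"
proof -
  have "{p. 0 \<le> pt_value d (fst p) (snd p) D F T}
      = {p. ((F - T - (real d - 1) * D) / 2, (F + T - (real d + 1) * D) / 2) \<bullet> p \<ge> - (D / real d)}"
    using assms by (auto simp: pt_value_affine)
  then show ?thesis by (simp add: convex_halfspace_ge)
qed

lemma pt_value_at_vertices:
  assumes "d \<ge> 2"
  shows "2 * (real d * (real d - 1)) * pt_value d (1 / (real d * (real d - 1))) 0 D F T
           = (real d - 1) * D + F - T"
    and "real d * (3 * real d - 2) * pt_value d (4 / (real d * (3 * real d - 2))) 0 D F T
           = real d * D + 2 * F - 2 * T"
    and "real d * (2 * real d - 1)
           * pt_value d (3 / (real d * (2 * real d - 1))) (1 / (real d * (2 * real d - 1))) D F T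
           = 2 * F - T"
    and "real d * (real d - 1) * pt_value d (1 / (real d * (real d - 1))) (1 / (real d * (real d - 1))) D F T
           = F - D"
proof -
  have "real d \<noteq> 0" "real d * (real d - 1) \<noteq> 0" "real d * (3 * real d - 2) \<noteq> 0"
    "real d * (2 * real d - 1) \<noteq> 0"
    using assms by auto
  then have inv: "real d * (1 / real d) = 1"
    "real d * (real d - 1) * (1 / (real d * (real d - 1))) = 1"
    "real d * (3 * real d - 2) * (4 / (real d * (3 * real d - 2))) = 4"
    "real d * (2 * real d - 1) * (1 / (real d * (2 * real d - 1))) = 1"
    "real d * (2 * real d - 1) * (3 / (real d * (2 * real d - 1))) = 3"
    by simp_all
  show "2 * (real d * (real d - 1)) * pt_value d (1 / (real d * (real d - 1))) 0 D F T
           = (real d - 1) * D + F - T"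
    using inv(1,2) unfolding pt_value_def rho_bc_a_def by algebra
  show "real d * (3 * real d - 2) * pt_value d (4 / (real d * (3 * real d - 2))) 0 D F T
           = real d * D + 2 * F - 2 * T"
    using inv(1,3) unfolding pt_value_def rho_bc_a_def by algebra
  show "real d * (2 * real d - 1)
           * pt_value d (3 / (real d * (2 * real d - 1))) (1 / (real d * (2 * real d - 1))) D F T
           = 2 * F - T"
    using inv(1,4,5) unfolding pt_value_def rho_bc_a_def by algebra
  show "real d * (real d - 1) * pt_value d (1 / (real d * (real d - 1))) (1 / (real d * (real d - 1))) D F T
           = F - D"
    using inv(1,2) unfolding pt_value_def rho_bc_a_def by algebra
qed

definition vertices_BCGK :: "nat \<Rightarrow> (real \<times> real) set" where
  "vertices_BCGK d =
     {(1 / (real d * (real d - 1)), 0),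
      (4 / (real d * (3 * real d - 2)), 0),
      (3 / (real d * (2 * real d - 1)), 1 / (real d * (2 * real d - 1))),
      (1 / (real d * (real d - 1)), 1 / (real d * (real d - 1)))}"

lemma pt_value_nonneg_on_hull:
  assumes "d \<ge> 2" "0 \<le> D" "D \<le> F" "T \<le> real d * D" "T \<le> 2 * F"
    and "(b, c) \<in> convex hull vertices_BCGK d"
  shows "0 \<le> pt_value d b c D F T"
proof -
  let ?H = "{p. 0 \<le> pt_value d (fst p) (snd p) D F T}"
  have pos: "0 < real d * (real d - 1)" "0 < real d * (3 * real d - 2)" "0 < real d * (2 * real d - 1)"
    using assms(1) by auto
  have "0 \<le> (real d - 2) * D"
    using assms(1,2) by simp
  then have num: "0 \<le> (real d - 1) * D + F - T" "0 \<le> real d * D + 2 * F - 2 * T"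
    "0 \<le> 2 * F - T" "0 \<le> F - D"
    using assms(3-5) by (simp_all add: algebra_simps)
  have nonneg_factor: "0 \<le> x" if "0 < m" "m * x = y" "0 \<le> y" for m x y :: real
    using that zero_le_mult_iff[of m x] by auto
  have "vertices_BCGK d \<subseteq> ?H"
    using nonneg_factor[OF _ pt_value_at_vertices(1)[OF assms(1)] num(1)]
      nonneg_factor[OF pos(2) pt_value_at_vertices(2)[OF assms(1)] num(2)]
      nonneg_factor[OF pos(3) pt_value_at_vertices(3)[OF assms(1)] num(3)]
      nonneg_factor[OF pos(1) pt_value_at_vertices(4)[OF assms(1)] num(4)] pos(1)
    by (simp add: vertices_BCGK_def)
  moreover have "convex ?H"
    using assms(1) by (intro convex_pt_value_nonneg) simp
  ultimately have "convex hull vertices_BCGK d \<subseteq> ?H"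
    by (rule hull_minimal)
  with assms(6) show ?thesis
    by auto
qed

theorem proposition1:
  fixes d :: nat and b c :: real
  assumes "d \<ge> 2"
    and "(b, c) \<in> convex hull
           {(1 / (real d * (real d - 1)), 0),
            (4 / (real d * (3 * real d - 2)), 0),
            (3 / (real d * (2 * real d - 1)), 1 / (real d * (2 * real d - 1))),
            (1 / (real d * (real d - 1)), 1 / (real d * (real d - 1)))}"
  shows "\<forall>\<phi> :: bivec. schmidt_rank d \<phi> = 2 \<longrightarrow>
           0 \<le> qform d (partial_transpose (rho_bc d b c)) \<phi>"
proof (intro allI impI)
  fix \<phi> :: bivec
  assume "schmidt_rank d \<phi> = 2"
  then have "0 \<le> pt_value d b c (diag_sq_norm d \<phi>) (sq_norm d \<phi>) ((cmod (coeff_trace d \<phi>))\<^sup>2)"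
    using pt_value_nonneg_on_hull[OF assms(1) diag_sq_norm_nonneg diag_sq_norm_le_sq_norm
        coeff_trace_sq_le_diag coeff_trace_sq_le_schmidt_rank_two assms(2)[folded vertices_BCGK_def]]
    by blast
  then show "0 \<le> qform d (partial_transpose (rho_bc d b c)) \<phi>"
    by (simp add: qform_partial_transpose_rho_bc less_eq_complex_def)
qed

end
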